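(* Let $d\ge 3$ and let $A=\lambda B+(1-\lambda)B'$ with $0<\lambda<1$, where $B,B'$ are $d$-dimensional $(0,1)$-matrices of order $4$ each equivalent to $\mathcal{M}_4^d$. If the tessellation index of $A$ (with respect to $B,B'$) is $-\infty$, i.e. no filled subcube of $B$ intersects any filled subcube of $B'$, then $\operatorname{per}A>0$.
   Context: $\mathcal{M}_4^d$ has entry $1$ at $\alpha$ iff $\alpha_1+\dots+\alpha_d\equiv0\pmod 4$. Equivalence: permuting coordinate positions and/or applying a permutation of $\{0,1,2,3\}$ to a single coordinate, repeatedly. A diagonal is a set of $4$ indices any two of which differ in every coordinate; $\operatorname{per}A=\sum_p\prod_{\alpha\in p}a_\alpha$ over diagonals. Define $p_1,p_2,p_3:\{0,1,2,3\}\to\{0,1\}$ by $p_1(0)=p_1(1)=0,\ p_1(2)=p_1(3)=1$; $p_2(0)=p_2(2)=0,\ p_2(1)=p_2(3)=1$; $p_3(0)=p_3(3)=0,\ p_3(1)=p_3(2)=1$; and $\mu_1(0)=\mu_1(2)=0,\ \mu_1(1)=\mu_1(3)=1$; $\mu_2(0)=\mu_2(1)=0,\ \mu_2(2)=\mu_2(3)=1$; $\mu_3(0)=\mu_3(2)=0,\ \mu_3(1)=\mu_3(3)=1$. $Q_s^d=\{y\in\{0,1\}^d:w(y)\equiv s\pmod 2\}$ ($w$ = Hamming weight). For $\mathcal{E}\in\{1,2,3\}^d$, $s\in\{0,1\}$, $\lambda:Q_s^d\to\{0,1\}$, the block permutation with parameters $(\mathcal{E},\lambda,s)$ is the $(0,1)$-matrix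 with entry $1$ at $\alpha$ iff $\bigoplus_i p_{\varepsilon_i}(\alpha_i)=s$ and $\bigoplus_i\mu_{\varepsilon_i}(\alpha_i)\oplus\lambda(p_{\varepsilon_1}(\alpha_1),\dots,p_{\varepsilon_d}(\alpha_d))=0$. Every matrix equivalent to $\mathcal{M}_4^d$ ($d\ge3$) is a block permutation for a unique parameter triple; relative to these, its subcubes are $C_y=\{\alpha:p_{\varepsilon_i}(\alpha_i)=y_i\ \forall i\}$ and $C_y$ is filled if $w(y)\equiv s\pmod 2$. The intersection of a subcube of $B$ with a subcube of $B'$ is either empty or a product set of size $2^j$; the tessellation index of $\lambda B+(1-\lambda)B'$ is the maximum of such $j$ over pairs (filled subcube of $B$, filled subcube of $B'$) with nonempty intersection, and $-\infty$ if all such intersections are empty. *)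

theory Defs
  imports Complex_Main "HOL-Combinatorics.Permutations"
begin

text \<open>Indices of a d-dimensional matrix of order 4: functions nat => nat with
  alpha i < 4 for i < d and alpha i = 0 for i >= d.  Matrices are real-valued
  functions on such indices (values outside the index set are irrelevant).\<close>

definition idx :: "nat \<Rightarrow> (nat \<Rightarrow> nat) set" where
  "idx d = {\<alpha>. (\<forall>i<d. \<alpha> i < 4) \<and> (\<forall>i\<ge>d. \<alpha> i = 0)}"

definition M4 :: "nat \<Rightarrow> (nat \<Rightarrow> nat) \<Rightarrow> real" where
  "M4 d \<alpha> = (if (\<Sum>i<d. \<alpha> i) mod 4 = 0 then 1 else 0)"

inductive equiv_to :: "nat \<Rightarrow> ((nat \<Rightarrow> nat) \<Rightarrow> real) \<Rightarrow> ((nat \<Rightarrow> nat) \<Rightarrow> real) \<Rightarrow> bool"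
  for d :: nat and M :: "(nat \<Rightarrow> nat) \<Rightarrow> real" where
  refl: "equiv_to d M M"
| coord_perm: "equiv_to d M B \<Longrightarrow> \<pi> permutes {..<d} \<Longrightarrow>
      equiv_to d M (\<lambda>\<alpha>. B (\<alpha> \<circ> \<pi>))"
| value_perm: "equiv_to d M B \<Longrightarrow> i < d \<Longrightarrow> \<tau> permutes {..<4} \<Longrightarrow>
      equiv_to d M (\<lambda>\<alpha>. B (\<alpha>(i := \<tau> (\<alpha> i))))"

definition pp :: "nat \<Rightarrow> nat \<Rightarrow> bool" where
  "pp e x = (if e = 1 then x \<in> {2,3} else if e = 2 then x \<in> {1,3}
             else if e = 3 then x \<in> {1,2} else False)"

definition mu :: "nat \<Rightarrow> nat \<Rightarrow> bool" where
  "mu e x = (if e = 1 then x \<in> {1,3} else if e = 2 then x \<in> {2,3}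
             else if e = 3 then x \<in> {1,3} else False)"

definition xor_d :: "nat \<Rightarrow> (nat \<Rightarrow> bool) \<Rightarrow> bool" where
  "xor_d d P = odd (card {i. i < d \<and> P i})"

definition pvec :: "nat \<Rightarrow> (nat \<Rightarrow> nat) \<Rightarrow> (nat \<Rightarrow> nat) \<Rightarrow> (nat \<Rightarrow> bool)" where
  "pvec d E \<alpha> = (\<lambda>i. if i < d then pp (E i) (\<alpha> i) else False)"

definition valid_E :: "nat \<Rightarrow> (nat \<Rightarrow> nat) \<Rightarrow> bool" where
  "valid_E d E = (\<forall>i<d. E i \<in> {1,2,3})"

text \<open>Block permutation with parameters (E, lam, s); s is a bit (True = 1),
  lam : Q_s^d -> {0,1} is bool-valued (only its values on Q_s^d matter).\<close>
definition block_perm :: "nat \<Rightarrow> (nat \<Rightarrow> nat) \<Rightarrow> ((nat \<Rightarrow> bool) \<Rightarrow> bool) \<Rightarrow> bool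
    \<Rightarrow> (nat \<Rightarrow> nat) \<Rightarrow> real" where
  "block_perm d E lam s \<alpha> =
     (if xor_d d (\<lambda>i. pp (E i) (\<alpha> i)) = s \<and>
         xor_d d (\<lambda>i. mu (E i) (\<alpha> i)) = lam (pvec d E \<alpha>) then 1 else 0)"

definition is_block_perm_params ::
  "nat \<Rightarrow> ((nat \<Rightarrow> nat) \<Rightarrow> real) \<Rightarrow> (nat \<Rightarrow> nat) \<Rightarrow> ((nat \<Rightarrow> bool) \<Rightarrow> bool) \<Rightarrow> bool \<Rightarrow> bool" where
  "is_block_perm_params d B E lam s =
     (valid_E d E \<and> (\<forall>\<alpha>\<in>idx d. B \<alpha> = block_perm d E lam s \<alpha>))"

definition subcube :: "nat \<Rightarrow> (nat \<Rightarrow> nat) \<Rightarrow> (nat \<Rightarrow> bool) \<Rightarrow> (nat \<Rightarrow> nat) set" where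
  "subcube d E y = {\<alpha>\<in>idx d. \<forall>i<d. pp (E i) (\<alpha> i) = y i}"

definition filled :: "nat \<Rightarrow> bool \<Rightarrow> (nat \<Rightarrow> bool) \<Rightarrow> bool" where
  "filled d s y = (xor_d d y = s)"

definition tess_neg_inf ::
  "nat \<Rightarrow> (nat \<Rightarrow> nat) \<Rightarrow> bool \<Rightarrow> (nat \<Rightarrow> nat) \<Rightarrow> bool \<Rightarrow> bool" where
  "tess_neg_inf d E s E' s' =
     (\<forall>y y'. filled d s y \<longrightarrow> filled d s' y' \<longrightarrow>
        subcube d E y \<inter> subcube d E' y' = {})"

definition diagonals :: "nat \<Rightarrow> (nat \<Rightarrow> nat) set set" where
  "diagonals d = {D. D \<subseteq> idx d \<and> card D = 4 \<and>
      (\<forall>\<alpha>\<in>D. \<forall>\<beta>\<in>D. \<alpha> \<noteq> \<beta> \<longrightarrow> (\<forall>i<d. \<alpha> i \<noteq> \<beta> i))}"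

definition per :: "nat \<Rightarrow> ((nat \<Rightarrow> nat) \<Rightarrow> real) \<Rightarrow> real" where
  "per d A = (\<Sum>D\<in>diagonals d. \<Prod>\<alpha>\<in>D. A \<alpha>)"

end

theory Submission
  imports Defs
begin

text \<open>
  For each e \<in> {1,2,3} the map x \<mapsto> (p_e x, \<mu>_e x) is a bijection {0,1,2,3} \<rightarrow> bool \<times> bool, so
  relative to \<E> an index is a pair (y, z) of bit vectors, and the block permutation
  (\<E>, \<lambda>, s) is the set of pairs with \<oplus>y = s and \<oplus>z = \<lambda>(y).  Tessellation index -\<infinity>
  forces B' to use the same \<E> and the opposite parity s' = \<not>s: otherwise flipping one
  \<mu>-bit inside a filled subcube of B moves the point between two subcubes of B' of
  opposite parity.  Hence every y labels a layer of B or of B', and the indices where B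
  or B' is 1 are exactly the pairs with \<oplus>z = f(y) for a single function f.
  Four pairs (y, z1), (y', z2), (\<not>y', z3), (\<not>y, z4) form a diagonal iff they differ pairwise
  in every coordinate, which forces z4 = z1 \<oplus> z2 \<oplus> z3 pointwise; such z's with the
  prescribed parities exist iff f(y) \<oplus> f(\<not>y) = f(y') \<oplus> f(\<not>y'), given a coordinate where
  y and y' agree and one where they differ.  Among the zero vector and the first two unit
  vectors two share this value, and d \<ge> 3 provides the common coordinate 2.  This diagonal
  consists of positive entries of A = c B + (1 - c) B' \<ge> 0, so per A > 0.
\<close>

lemma xor_d_0 [simp]: "xor_d 0 P = False"
  unfolding xor_d_def by simp

lemma xor_d_Suc: "xor_d (Suc d) P = (xor_d d P \<noteq> P d)"
proof -
  have "{i. i < Suc d \<and> P i} = (if P d then insert d {i. i < d \<and> P i} else {i. i < d \<and> P i})"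
    by (auto simp: less_Suc_eq)
  then show ?thesis
    unfolding xor_d_def by (simp add: card_insert_disjoint)
qed

lemma xor_d_neq: "xor_d d (\<lambda>i. P i \<noteq> Q i) = (xor_d d P \<noteq> xor_d d Q)"
  by (induction d) (auto simp: xor_d_Suc)

lemma xor_d_cong: "(\<And>i. i < d \<Longrightarrow> P i = Q i) \<Longrightarrow> xor_d d P = xor_d d Q"
  unfolding xor_d_def by (metis (mono_tags, lifting) Collect_cong)

lemma xor_d_False [simp]: "xor_d d (\<lambda>i. False) = False"
  unfolding xor_d_def by simp

lemma xor_d_unit: "k < d \<Longrightarrow> xor_d d (\<lambda>i. i = k)"
proof -
  assume "k < d"
  then have "{i. i < d \<and> i = k} = {k}" by auto
  then show ?thesis unfolding xor_d_def by simp
qed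

lemma xor_d_upd_False: "k < d \<Longrightarrow> xor_d d ((\<lambda>i. False)(k := b)) = b"
  by (cases b) (simp_all add: fun_upd_def xor_d_unit)

lemma xor_d_flip: "k < d \<Longrightarrow> xor_d d (P(k := \<not> P k)) = (\<not> xor_d d P)"
proof -
  assume "k < d"
  moreover have "P(k := \<not> P k) = (\<lambda>i. P i \<noteq> (i = k))" by auto
  ultimately show ?thesis using xor_d_neq[of d P "\<lambda>i. i = k"] xor_d_unit by simp
qed

lemma xor_d_upd_exists: "k < d \<Longrightarrow> \<exists>b. xor_d d (P(k := b)) = t"
  by (metis fun_upd_triv xor_d_flip)

definition digit :: "nat \<Rightarrow> bool \<Rightarrow> bool \<Rightarrow> nat" where
  "digit e p m = (if e = 1 then (if p then 2 else 0) + (if m then 1 else 0)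
     else if e = 2 then (if p then 1 else 0) + (if m then 2 else 0)
     else (if p then (if m then 1 else 2) else (if m then 3 else 0)))"

lemma pp_digit: "e \<in> {1,2,3} \<Longrightarrow> pp e (digit e p m) = p"
  unfolding digit_def pp_def by (cases p; cases m) auto

lemma mu_digit: "e \<in> {1,2,3} \<Longrightarrow> mu e (digit e p m) = m"
  unfolding digit_def mu_def by (cases p; cases m) auto

lemma digit_less_4: "digit e p m < 4"
  unfolding digit_def by (cases p; cases m) auto

lemma pp_digit_other:
  "e \<in> {1,2,3} \<Longrightarrow> e' \<in> {1,2,3} \<Longrightarrow> e \<noteq> e' \<Longrightarrow> pp e' (digit e False m) = m"
  unfolding digit_def pp_def by (cases m) auto

definition idx_of :: "nat \<Rightarrow> (nat \<Rightarrow> nat) \<Rightarrow> (nat \<Rightarrow> bool) \<Rightarrow> (nat \<Rightarrow> bool) \<Rightarrow> nat \<Rightarrow> nat" where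
  "idx_of d E y z = (\<lambda>i. if i < d then digit (E i) (y i) (z i) else 0)"

lemma idx_of_in_idx: "idx_of d E y z \<in> idx d"
  unfolding idx_def idx_of_def using digit_less_4 by auto

lemma pp_idx_of: "valid_E d E \<Longrightarrow> i < d \<Longrightarrow> pp (E i) (idx_of d E y z i) = y i"
  unfolding idx_of_def valid_E_def using pp_digit by auto

lemma mu_idx_of: "valid_E d E \<Longrightarrow> i < d \<Longrightarrow> mu (E i) (idx_of d E y z i) = z i"
  unfolding idx_of_def valid_E_def using mu_digit by auto

lemma idx_of_eq_iff:
  assumes "valid_E d E" and "i < d"
  shows "idx_of d E y z i = idx_of d E y' z' i \<longleftrightarrow> (y i, z i) = (y' i, z' i)"
proof
  assume "idx_of d E y z i = idx_of d E y' z' i"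
  then show "(y i, z i) = (y' i, z' i)"
    using pp_idx_of[OF assms, of y z] pp_idx_of[OF assms, of y' z']
      mu_idx_of[OF assms, of y z] mu_idx_of[OF assms, of y' z'] by simp
qed (simp add: idx_of_def)

lemma block_perm_idx_of:
  assumes "valid_E d E"
  shows "block_perm d E lam s (idx_of d E y z) =
    (if xor_d d y = s \<and> xor_d d z = lam (\<lambda>i. i < d \<and> y i) then 1 else 0)"
proof -
  have "xor_d d (\<lambda>i. pp (E i) (idx_of d E y z i)) = xor_d d y"
    by (rule xor_d_cong) (simp add: pp_idx_of assms)
  moreover have "xor_d d (\<lambda>i. mu (E i) (idx_of d E y z i)) = xor_d d z"
    by (rule xor_d_cong) (simp add: mu_idx_of assms)
  moreover have "pvec d E (idx_of d E y z) = (\<lambda>i. i < d \<and> y i)"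
    unfolding pvec_def using pp_idx_of[OF assms] by auto
  ultimately show ?thesis unfolding block_perm_def by simp
qed

lemma block_perm_cong_E:
  "(\<And>i. i < d \<Longrightarrow> E' i = E i) \<Longrightarrow> block_perm d E' lam s = block_perm d E lam s"
proof
  fix \<alpha> assume E: "\<And>i. i < d \<Longrightarrow> E' i = E i"
  then have "xor_d d (\<lambda>i. pp (E' i) (\<alpha> i)) = xor_d d (\<lambda>i. pp (E i) (\<alpha> i))"
    and "xor_d d (\<lambda>i. mu (E' i) (\<alpha> i)) = xor_d d (\<lambda>i. mu (E i) (\<alpha> i))"
    and "pvec d E' \<alpha> = pvec d E \<alpha>"
    by (simp_all cong: xor_d_cong add: pvec_def)
  then show "block_perm d E' lam s \<alpha> = block_perm d E lam s \<alpha>"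
    unfolding block_perm_def by simp
qed

lemma tess_neg_inf_not_both_filled:
  assumes "tess_neg_inf d E s E' s'" and "\<alpha> \<in> idx d"
  shows "\<not> (xor_d d (\<lambda>i. pp (E i) (\<alpha> i)) = s \<and> xor_d d (\<lambda>i. pp (E' i) (\<alpha> i)) = s')"
proof
  assume "xor_d d (\<lambda>i. pp (E i) (\<alpha> i)) = s \<and> xor_d d (\<lambda>i. pp (E' i) (\<alpha> i)) = s'"
  moreover have "\<alpha> \<in> subcube d E (\<lambda>i. pp (E i) (\<alpha> i)) \<inter> subcube d E' (\<lambda>i. pp (E' i) (\<alpha> i))"
    using assms(2) unfolding subcube_def by auto
  ultimately show False
    using assms(1) unfolding tess_neg_inf_def filled_def by blast
qed

lemma tess_neg_inf_same_E:
  assumes E: "valid_E d E" and E': "valid_E d E'" and "2 \<le> d"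
    and tess: "tess_neg_inf d E s E' s'" and k: "k < d"
  shows "E' k = E k"
proof (rule ccontr)
  assume ne: "E' k \<noteq> E k"
  define j where "j = (if k = 0 then 1 else (0::nat))"
  have j: "j < d" "j \<noteq> k" using \<open>2 \<le> d\<close> unfolding j_def by auto
  define y where "y = (\<lambda>i::nat. False)(j := s)"
  have y: "xor_d d y = s" "\<not> y k" using j unfolding y_def by (auto simp: xor_d_upd_False)
  define z where "z b = (\<lambda>i::nat. False)(k := b)" for b
  have filled_E: "xor_d d (\<lambda>i. pp (E i) (idx_of d E y (z b) i)) = s" for b
    using y(1) by (simp cong: xor_d_cong add: pp_idx_of[OF E])
  have "E k \<in> {1,2,3}" "E' k \<in> {1,2,3}" using E E' k unfolding valid_E_def by auto
  then have "(\<lambda>i. pp (E' i) (idx_of d E y (z True) i)) =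
      (\<lambda>i. pp (E' i) (idx_of d E y (z False) i))(k := \<not> pp (E' k) (idx_of d E y (z False) k))"
    using ne k y(2) by (intro ext) (auto simp: idx_of_def z_def pp_digit_other)
  then have "xor_d d (\<lambda>i. pp (E' i) (idx_of d E y (z True) i)) \<noteq>
      xor_d d (\<lambda>i. pp (E' i) (idx_of d E y (z False) i))"
    using xor_d_flip[OF k] by simp
  then show False
    using tess_neg_inf_not_both_filled[OF tess idx_of_in_idx] filled_E by metis
qed

lemma tess_neg_inf_opposite_parity:
  assumes E: "valid_E d E" and same: "\<And>i. i < d \<Longrightarrow> E' i = E i"
    and tess: "tess_neg_inf d E s E' s'" and "0 < d"
  shows "s' = (\<not> s)"
proof -
  define \<alpha> where "\<alpha> = idx_of d E ((\<lambda>i. False)(0 := s)) (\<lambda>i. False)"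
  have "xor_d d (\<lambda>i. pp (E i) (\<alpha> i)) = s" and "xor_d d (\<lambda>i. pp (E' i) (\<alpha> i)) = s"
    using \<open>0 < d\<close> by (simp_all cong: xor_d_cong add: same \<alpha>_def pp_idx_of[OF E] xor_d_upd_False
        del: fun_upd_apply)
  then show ?thesis
    using tess_neg_inf_not_both_filled[OF tess] idx_of_in_idx unfolding \<alpha>_def by metis
qed

lemma four_point_diagonal:
  assumes "0 < d" and "{a, b, c, e} \<subseteq> idx d"
    and "\<And>i. i < d \<Longrightarrow> distinct [a i, b i, c i, e i]"
  shows "{a, b, c, e} \<in> diagonals d"
proof -
  have "distinct [a, b, c, e]" using assms(3)[OF \<open>0 < d\<close>] by auto
  then have "card {a, b, c, e} = 4" by simp
  moreover have "\<forall>\<alpha>\<in>{a, b, c, e}. \<forall>\<beta>\<in>{a, b, c, e}. \<alpha> \<noteq> \<beta> \<longrightarrow> (\<forall>i<d. \<alpha> i \<noteq> \<beta> i)"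
    using assms(3) by fastforce
  ultimately show ?thesis using assms(2) unfolding diagonals_def by blast
qed

text \<open>The bit vectors z2 and z3 are forced to be \<not>z1 where y, y' agree resp. differ, and are
  free elsewhere; the free coordinates jD and jS fix their parities.\<close>

lemma diagonal_bits_exist:
  assumes "jS < d" "y jS = y' jS" "jD < d" "y jD \<noteq> y' jD"
    and "(t1 \<noteq> t4) = (t2 \<noteq> t3)"
  shows "\<exists>z1 z2 z3 z4. xor_d d z1 = t1 \<and> xor_d d z2 = t2 \<and> xor_d d z3 = t3 \<and> xor_d d z4 = t4 \<and>
    (\<forall>i<d. distinct [(y i, z1 i), (y' i, z2 i), (\<not> y' i, z3 i), (\<not> y i, z4 i)])"
proof -
  have "0 < d" using assms(1) by simp
  obtain b1 where b1: "xor_d d ((\<lambda>i. False)(0 := b1)) = t1"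
    using xor_d_upd_exists[OF \<open>0 < d\<close>] by blast
  define z1 where "z1 = (\<lambda>i::nat. False)(0 := b1)"
  obtain b2 where b2: "xor_d d ((\<lambda>i. y i = y' i \<and> \<not> z1 i)(jD := b2)) = t2"
    using xor_d_upd_exists[OF assms(3)] by blast
  define z2 where "z2 = (\<lambda>i. y i = y' i \<and> \<not> z1 i)(jD := b2)"
  obtain b3 where b3: "xor_d d ((\<lambda>i. y i \<noteq> y' i \<and> \<not> z1 i)(jS := b3)) = t3"
    using xor_d_upd_exists[OF assms(1)] by blast
  define z3 where "z3 = (\<lambda>i. y i \<noteq> y' i \<and> \<not> z1 i)(jS := b3)"
  define z4 where "z4 = (\<lambda>i. (z1 i \<noteq> z2 i) \<noteq> z3 i)"
  have parities: "xor_d d z1 = t1" "xor_d d z2 = t2" "xor_d d z3 = t3"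
    using b1 b2 b3 unfolding z1_def z2_def z3_def by simp_all
  then have "xor_d d z4 = t4"
    unfolding z4_def xor_d_neq using assms(5) by blast
  moreover have "distinct [(y i, z1 i), (y' i, z2 i), (\<not> y' i, z3 i), (\<not> y i, z4 i)]" for i
    using assms(2,4) by (cases "y i = y' i") (auto simp: z2_def z3_def z4_def)
  ultimately show ?thesis using parities by blast
qed

text \<open>The function f of the proof idea: on a layer y filled in B, B is 1 exactly where the
  \<mu>-bits have parity f(y); on the other layers the same holds for B'.\<close>

definition union_mu_parity ::
  "nat \<Rightarrow> bool \<Rightarrow> ((nat \<Rightarrow> bool) \<Rightarrow> bool) \<Rightarrow> ((nat \<Rightarrow> bool) \<Rightarrow> bool) \<Rightarrow> (nat \<Rightarrow> bool) \<Rightarrow> bool" where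
  "union_mu_parity d s lam lam' y =
     (if xor_d d y = s then lam (\<lambda>i. i < d \<and> y i) else lam' (\<lambda>i. i < d \<and> y i))"

lemma block_perm_union_idx_of:
  assumes "valid_E d E" and "xor_d d z = union_mu_parity d s lam lam' y"
  shows "block_perm d E lam s (idx_of d E y z) = 1 \<or> block_perm d E lam' (\<not> s) (idx_of d E y z) = 1"
  using assms by (auto simp: block_perm_idx_of union_mu_parity_def)

lemma diagonal_in_union_support:
  assumes E: "valid_E d E"
    and "jS < d" "y jS = y' jS" "jD < d" "y jD \<noteq> y' jD"
    and "(union_mu_parity d s lam lam' y \<noteq> union_mu_parity d s lam lam' (\<lambda>i. \<not> y i)) =
         (union_mu_parity d s lam lam' y' \<noteq> union_mu_parity d s lam lam' (\<lambda>i. \<not> y' i))"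
  shows "\<exists>D\<in>diagonals d. \<forall>\<alpha>\<in>D. block_perm d E lam s \<alpha> = 1 \<or> block_perm d E lam' (\<not> s) \<alpha> = 1"
proof -
  let ?f = "union_mu_parity d s lam lam'"
  obtain z1 z2 z3 z4 where z: "xor_d d z1 = ?f y" "xor_d d z2 = ?f y'"
      "xor_d d z3 = ?f (\<lambda>i. \<not> y' i)" "xor_d d z4 = ?f (\<lambda>i. \<not> y i)"
    and dist: "\<forall>i<d. distinct [(y i, z1 i), (y' i, z2 i), (\<not> y' i, z3 i), (\<not> y i, z4 i)]"
    using diagonal_bits_exist[OF assms(2-6)] by blast
  define D where "D = {idx_of d E y z1, idx_of d E y' z2,
    idx_of d E (\<lambda>i. \<not> y' i) z3, idx_of d E (\<lambda>i. \<not> y i) z4}"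
  have "D \<in> diagonals d"
    unfolding D_def
  proof (rule four_point_diagonal)
    show "0 < d" using assms(2) by simp
    fix i assume "i < d"
    then show "distinct [idx_of d E y z1 i, idx_of d E y' z2 i,
        idx_of d E (\<lambda>i. \<not> y' i) z3 i, idx_of d E (\<lambda>i. \<not> y i) z4 i]"
      using dist[rule_format, OF \<open>i < d\<close>] by (simp add: idx_of_eq_iff[OF E \<open>i < d\<close>])
  qed (simp add: idx_of_in_idx)
  moreover have "\<forall>\<alpha>\<in>D. block_perm d E lam s \<alpha> = 1 \<or> block_perm d E lam' (\<not> s) \<alpha> = 1"
    unfolding D_def using block_perm_union_idx_of[OF E z(1)] block_perm_union_idx_of[OF E z(2)]
      block_perm_union_idx_of[OF E z(3)] block_perm_union_idx_of[OF E z(4)] by simp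
  ultimately show ?thesis by blast
qed

lemma union_support_has_diagonal:
  assumes "valid_E d E" and "3 \<le> d"
  shows "\<exists>D\<in>diagonals d. \<forall>\<alpha>\<in>D. block_perm d E lam s \<alpha> = 1 \<or> block_perm d E lam' (\<not> s) \<alpha> = 1"
proof -
  let ?G = "\<lambda>y. union_mu_parity d s lam lam' y \<noteq> union_mu_parity d s lam lam' (\<lambda>i. \<not> y i)"
  consider "?G (\<lambda>i. False) = ?G (\<lambda>i. i = 0)" | "?G (\<lambda>i. False) = ?G (\<lambda>i. i = 1)"
    | "?G (\<lambda>i. i = 0) = ?G (\<lambda>i. i = 1)"
    by blast
  then show ?thesis
  proof cases
    case 1
    show ?thesis
      by (rule diagonal_in_union_support[OF assms(1), where jS = 2 and jD = 0
            and y = "\<lambda>i. False" and y' = "\<lambda>i. i = 0"]) (use 1 assms(2) in simp_all)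
  next
    case 2
    show ?thesis
      by (rule diagonal_in_union_support[OF assms(1), where jS = 2 and jD = 1
            and y = "\<lambda>i. False" and y' = "\<lambda>i. i = 1"]) (use 2 assms(2) in simp_all)
  next
    case 3
    show ?thesis
      by (rule diagonal_in_union_support[OF assms(1), where jS = 2 and jD = 0
            and y = "\<lambda>i. i = 0" and y' = "\<lambda>i. i = 1"]) (use 3 assms(2) in simp_all)
  qed
qed

lemma finite_idx: "finite (idx d)"
proof -
  have "idx d \<subseteq> {f. \<forall>x. (x \<in> {..<d} \<longrightarrow> f x \<in> {..<4::nat}) \<and> (x \<notin> {..<d} \<longrightarrow> f x = 0)}"
    unfolding idx_def by (simp add: subset_iff not_less)
  then show ?thesis
    by (rule finite_subset) (intro finite_set_of_finite_funs finite_lessThan)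
qed

lemma per_pos_if_positive_diagonal:
  assumes nonneg: "\<And>\<alpha>. \<alpha> \<in> idx d \<Longrightarrow> 0 \<le> A \<alpha>"
    and D: "D \<in> diagonals d" and pos: "\<And>\<alpha>. \<alpha> \<in> D \<Longrightarrow> 0 < A \<alpha>"
  shows "0 < per d A"
proof -
  have "finite (diagonals d)"
    by (rule finite_subset[of _ "Pow (idx d)"]) (auto simp: diagonals_def finite_idx)
  have "0 < (\<Prod>\<alpha>\<in>D. A \<alpha>)" by (rule prod_pos) (use pos in auto)
  also have "\<dots> \<le> per d A"
    unfolding per_def
  proof (rule member_le_sum[OF D _ \<open>finite (diagonals d)\<close>])
    fix D' assume "D' \<in> diagonals d - {D}"
    then show "0 \<le> (\<Prod>\<alpha>\<in>D'. A \<alpha>)"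
      using nonneg unfolding diagonals_def by (intro prod_nonneg) auto
  qed
  finally show ?thesis .
qed

theorem mainTheorem12:
  fixes d :: nat and c :: real
    and B B' :: "(nat \<Rightarrow> nat) \<Rightarrow> real"
    and E E' :: "nat \<Rightarrow> nat"
    and lam lam' :: "(nat \<Rightarrow> bool) \<Rightarrow> bool"
    and s s' :: bool
  assumes "d \<ge> 3"
    and "0 < c" and "c < 1"
    and "equiv_to d (M4 d) B" and "equiv_to d (M4 d) B'"
    and "is_block_perm_params d B E lam s"
    and "is_block_perm_params d B' E' lam' s'"
    and "tess_neg_inf d E s E' s'"
  shows "per d (\<lambda>\<alpha>. c * B \<alpha> + (1 - c) * B' \<alpha>) > 0"
proof -
  have E: "valid_E d E" and B: "\<And>\<alpha>. \<alpha> \<in> idx d \<Longrightarrow> B \<alpha> = block_perm d E lam s \<alpha>"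
    and E': "valid_E d E'" and B': "\<And>\<alpha>. \<alpha> \<in> idx d \<Longrightarrow> B' \<alpha> = block_perm d E' lam' s' \<alpha>"
    using assms(6,7) unfolding is_block_perm_params_def by auto
  have same_E: "\<And>i. i < d \<Longrightarrow> E' i = E i"
    using tess_neg_inf_same_E[OF E E' _ assms(8)] assms(1) by simp
  then have B'_E: "\<And>\<alpha>. \<alpha> \<in> idx d \<Longrightarrow> B' \<alpha> = block_perm d E lam' (\<not> s) \<alpha>"
    using B' tess_neg_inf_opposite_parity[OF E same_E assms(8)] block_perm_cong_E[OF same_E] assms(1)
    by simp
  obtain D where D: "D \<in> diagonals d"
    and ones: "\<forall>\<alpha>\<in>D. block_perm d E lam s \<alpha> = 1 \<or> block_perm d E lam' (\<not> s) \<alpha> = 1"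
    using union_support_has_diagonal[OF E assms(1)] by blast
  show ?thesis
  proof (rule per_pos_if_positive_diagonal[OF _ D])
    fix \<alpha> assume "\<alpha> \<in> idx d"
    then show "0 \<le> c * B \<alpha> + (1 - c) * B' \<alpha>"
      using assms(2,3) by (simp add: B B'_E block_perm_def)
  next
    fix \<alpha> assume "\<alpha> \<in> D"
    moreover have "\<alpha> \<in> idx d" using D \<open>\<alpha> \<in> D\<close> unfolding diagonals_def by blast
    ultimately have "B \<alpha> = 1 \<or> B' \<alpha> = 1" "0 \<le> B \<alpha>" "0 \<le> B' \<alpha>"
      using ones by (simp_all add: B B'_E block_perm_def)
    then show "0 < c * B \<alpha> + (1 - c) * B' \<alpha>"
      using assms(2,3) by (auto simp: add_pos_nonneg add_nonneg_pos)
  qed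
qed

end
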